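(* Let $(p_n)_n\subset[0,1]$. Then $$\lim_{K\to\infty}\liminf_{n\to\infty}\mathbb P_{p_n}\big(\exists i\in\mathbb N:\ Y_i^{(p_n)}(\tau_n)>K\big)=1$$ holds if and only if $p_n n^{1/\ell}\to\infty$ as $n\to\infty$ for each $\ell\in\mathbb N$. If one of these two statements fails, then $\lim_{K\to\infty}\liminf_{n\to\infty}\mathbb P_{p_n}\big(\exists i\in\mathbb N:\ Y_i^{(p_n)}(\tau_n)>K\big)=0$.
   Context: Let $p\in[0,1]$. Let $Z=(Z(t))_{t\ge0}$ be a standard Yule process: a continuous-time pure birth process started from $Z(0)=1$ in which each individual gives birth at rate $1$. Each newborn child is, independently of everything else, a clone of its parent (same genetic type) with probability $p$, and a mutant carrying a new genetic type with probability $1-p$. The ancestor has type $1$ and the successive mutants receive types $2,3,\dots$ in order of birth. For $i\in\mathbb N$, $Y_i^{(p)}(t)$ is the number of individuals of type $i$ at time $t$. Let $\tau_n=\inf\{t\ge0:Z(t)=n\}$. $\mathbb P_{p}$ denotes the law of this system with clone probability $p$. *)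

theory Defs
  imports "HOL-Probability.Probability"
begin

text \<open>The state of the system at the successive birth times of the Yule process is
  encoded as the list of genetic types of the individuals, in order of birth.
  At each birth, since all individuals reproduce at rate 1, the parent is uniform
  among the current individuals; the child is a clone (type of the parent) with
  probability p, otherwise a mutant carrying the next new type (current max type + 1).\<close>

definition yule_step :: "real \<Rightarrow> nat list \<Rightarrow> nat list pmf" where
  "yule_step p xs =
     bind_pmf (pmf_of_set {..<length xs}) (\<lambda>i.
     bind_pmf (bernoulli_pmf p) (\<lambda>c.
       return_pmf (xs @ [if c then xs ! i else Max (set xs) + 1])))"

fun yule_chain :: "real \<Rightarrow> nat \<Rightarrow> nat list pmf" where
  "yule_chain p 0 = return_pmf [1]"
| "yule_chain p (Suc m) = bind_pmf (yule_chain p m) (yule_step p)"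

text \<open>Law of the type list at time tau_n (population size n, i.e. n - 1 births).\<close>
definition yule_at_tau :: "real \<Rightarrow> nat \<Rightarrow> nat list pmf" where
  "yule_at_tau p n = yule_chain p (n - 1)"

definition Ycount :: "nat list \<Rightarrow> nat \<Rightarrow> nat" where
  "Ycount xs i = count (mset xs) i"

definition big_family_prob :: "real \<Rightarrow> nat \<Rightarrow> real \<Rightarrow> real" where
  "big_family_prob p n K =
     measure_pmf.prob (yule_at_tau p n) {xs. \<exists>i. real (Ycount xs i) > K}"

end

theory Submission
  imports Defs
begin

(* Write I_k for the number of individuals whose type has at least k members, and
   S_J for the number of J-element sets of individuals sharing a type.

   Big families are likely when n p_n^(j-1) -> oo for every j (equivalently,
   p_n n^(1/l) -> oo for every l): after n/2 births
   I_1 >= n/2, and in each of j - 1 further phases of about n/(2j) births, every birth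
   clones a member of a family of size exactly k with probability at least
   p (I_k - I_(k+1)) / n. The supermartingale 2^(b - I_(k+1)) then shows that
   I_(k+1) >= I_k p/(32 j) except with probability exp(-I_k p/(32 j)), so I_j is of
   order n (p/(32 j))^(j-1) at time tau_n.

   Big families are rare along a subsequence on which p_n n^(1/l) < Z: E S_J obeys a
   linear recursion in the number of births giving E S_J <= n (2p)^(J-1) (J-1)!, and
   for J = l + 2 this is O(n^(-1/l)), while P(some family exceeds K) <= E S_J for J <= K + 1. *)

section \<open>Finitely supported expectations\<close>

lemma expectation_bind_pmf_finite:
  fixes f :: "'b \<Rightarrow> real"
  assumes "finite (set_pmf M)" and "\<And>x. x \<in> set_pmf M \<Longrightarrow> finite (set_pmf (N x))"
  shows "measure_pmf.expectation (bind_pmf M N) f =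
    measure_pmf.expectation M (\<lambda>x. measure_pmf.expectation (N x) f)"
proof -
  have "measure_pmf.expectation (bind_pmf M N) f =
      (\<Sum>x\<in>set_pmf M. pmf M x *\<^sub>R measure_pmf.expectation (N x) f)"
    using assms by (intro pmf_expectation_bind) auto
  also have "\<dots> = measure_pmf.expectation M (\<lambda>x. measure_pmf.expectation (N x) f)"
    using assms by (subst integral_measure_pmf_real[of "set_pmf M"]) (auto simp: mult.commute)
  finally show ?thesis .
qed

lemma expectation_mono_pmf_finite:
  fixes f g :: "'b \<Rightarrow> real"
  assumes "finite (set_pmf M)" and "\<And>x. x \<in> set_pmf M \<Longrightarrow> f x \<le> g x"
  shows "measure_pmf.expectation M f \<le> measure_pmf.expectation M g"
  using assms by (intro integral_mono_AE) (auto simp: integrable_measure_pmf_finite AE_measure_pmf_iff)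

lemma prob_le_expectation_pmf_finite:
  fixes f :: "'b \<Rightarrow> real"
  assumes "finite (set_pmf M)" and "\<And>x. x \<in> set_pmf M \<Longrightarrow> indicator A x \<le> f x"
  shows "measure_pmf.prob M A \<le> measure_pmf.expectation M f"
  using expectation_mono_pmf_finite[of M "indicator A" f] assms by simp

lemma expectation_cong_pmf:
  fixes f g :: "'b \<Rightarrow> real"
  assumes "\<And>x. x \<in> set_pmf M \<Longrightarrow> f x = g x"
  shows "measure_pmf.expectation M f = measure_pmf.expectation M g"
  using assms by (intro integral_cong_AE) (auto simp: AE_measure_pmf_iff)

section \<open>The birth chain\<close>

lemma set_pmf_yule_step: "ys \<in> set_pmf (yule_step p xs) \<Longrightarrow> \<exists>x. ys = xs @ [x]"
  by (auto simp: yule_step_def)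

lemma finite_set_pmf_yule_step:
  assumes "xs \<noteq> []"
  shows "finite (set_pmf (yule_step p xs))"
proof (rule finite_subset)
  have "set_pmf (pmf_of_set {..<length xs}) = {..<length xs}"
    using assms by (intro set_pmf_of_set) auto
  then show "set_pmf (yule_step p xs) \<subseteq> (\<lambda>x. xs @ [x]) ` (set xs \<union> {Max (set xs) + 1})"
    by (auto simp: yule_step_def)
qed simp

lemma expectation_yule_step:
  fixes f :: "nat list \<Rightarrow> real"
  assumes ne: "xs \<noteq> []" and p: "0 \<le> p" "p \<le> 1"
  shows "measure_pmf.expectation (yule_step p xs) f =
    (\<Sum>i<length xs. p * f (xs @ [xs ! i]) + (1 - p) * f (xs @ [Max (set xs) + 1])) / real (length xs)"
proof -
  have clone_or_mutant: "measure_pmf.expectation (bernoulli_pmf p \<bind>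
      (\<lambda>c. return_pmf (xs @ [if c then xs ! i else Max (set xs) + 1]))) f =
      p * f (xs @ [xs ! i]) + (1 - p) * f (xs @ [Max (set xs) + 1])" for i
    using p by (simp add: map_pmf_def[symmetric])
  have "measure_pmf.expectation (yule_step p xs) f =
      (\<Sum>i<length xs. (p * f (xs @ [xs ! i]) + (1 - p) * f (xs @ [Max (set xs) + 1])) / length xs)"
    unfolding yule_step_def using ne
    by (subst pmf_expectation_bind_pmf_of_set) (auto simp: clone_or_mutant divide_simps)
  then show ?thesis by (simp add: sum_divide_distrib)
qed

fun yule_run :: "real \<Rightarrow> nat \<Rightarrow> nat list \<Rightarrow> nat list pmf" where
  "yule_run p 0 xs = return_pmf xs"
| "yule_run p (Suc L) xs = bind_pmf (yule_run p L xs) (yule_step p)"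

lemma set_pmf_yule_run:
  "ys \<in> set_pmf (yule_run p L xs) \<Longrightarrow> \<exists>zs. ys = xs @ zs \<and> length zs = L"
proof (induction L arbitrary: ys)
  case (Suc L)
  then obtain zs x where "zs \<in> set_pmf (yule_run p L xs)" "ys = zs @ [x]"
    using set_pmf_yule_step by fastforce
  with Suc.IH show ?case by fastforce
qed simp

lemma finite_set_pmf_yule_run: "xs \<noteq> [] \<Longrightarrow> finite (set_pmf (yule_run p L xs))"
proof (induction L)
  case (Suc L)
  have "finite (set_pmf (yule_step p ys))" if "ys \<in> set_pmf (yule_run p L xs)" for ys
    using set_pmf_yule_run[OF that] Suc.prems by (auto intro!: finite_set_pmf_yule_step)
  with Suc show ?case by auto
qed simp

lemma yule_chain_add: "yule_chain p (T + L) = bind_pmf (yule_chain p T) (yule_run p L)"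
  by (induction L) (simp_all add: bind_return_pmf' bind_assoc_pmf)

lemma yule_chain_eq_yule_run: "yule_chain p m = yule_run p m [1]"
  using yule_chain_add[of p 0 m] by (simp add: bind_return_pmf)

lemma length_yule_chain: "ys \<in> set_pmf (yule_chain p m) \<Longrightarrow> length ys = Suc m"
  using set_pmf_yule_run[of ys p m "[1]"] by (auto simp: yule_chain_eq_yule_run)

lemma finite_set_pmf_yule_chain: "finite (set_pmf (yule_chain p m))"
  by (simp add: yule_chain_eq_yule_run finite_set_pmf_yule_run)

section \<open>Families of size at least k\<close>

definition members_ge :: "nat list \<Rightarrow> nat \<Rightarrow> nat" where
  "members_ge xs k = card {i. i < length xs \<and> k \<le> count (mset xs) (xs ! i)}"

lemma members_ge_le_length: "members_ge xs k \<le> length xs"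
  unfolding members_ge_def by (rule order.trans[OF card_mono[of "{..<length xs}"]]) auto

lemma members_ge_1: "members_ge xs 1 = length xs"
proof -
  have "{i. i < length xs \<and> 1 \<le> count (mset xs) (xs ! i)} = {..<length xs}"
    by (auto simp: Suc_le_eq)
  then show ?thesis unfolding members_ge_def by simp
qed

lemma members_ge_append_mono: "members_ge xs k \<le> members_ge (xs @ zs) k"
  unfolding members_ge_def by (intro card_mono) (auto simp: nth_append)

lemma members_ge_Suc:
  "members_ge xs k = members_ge xs (Suc k) + card {i. i < length xs \<and> count (mset xs) (xs ! i) = k}"
proof -
  have "{i. i < length xs \<and> k \<le> count (mset xs) (xs ! i)} =
      {i. i < length xs \<and> Suc k \<le> count (mset xs) (xs ! i)} \<union>
      {i. i < length xs \<and> count (mset xs) (xs ! i) = k}"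
    by auto
  then show ?thesis unfolding members_ge_def by (simp add: card_Un_disjoint[symmetric] disjoint_iff)
qed

lemma members_ge_clone_gt:
  assumes "i < length xs" and "count (mset xs) (xs ! i) = k"
  shows "members_ge xs (Suc k) < members_ge (xs @ [xs ! i]) (Suc k)"
proof -
  let ?ys = "xs @ [xs ! i]"
  let ?A = "{j. j < length xs \<and> Suc k \<le> count (mset xs) (xs ! j)}"
  let ?B = "{j. j < length ?ys \<and> Suc k \<le> count (mset ?ys) (?ys ! j)}"
  have "?A \<subseteq> ?B"
    by (auto simp: nth_append)
  moreover have "length xs \<in> ?B - ?A"
    using assms by auto
  ultimately have "?A \<subset> ?B"
    by blast
  then show ?thesis
    unfolding members_ge_def by (intro psubset_card_mono) auto
qed

lemma members_ge_pos_imp_ex_count: "0 < members_ge xs k \<Longrightarrow> \<exists>v. k \<le> count (mset xs) v"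
  unfolding members_ge_def by (metis (no_types, lifting) card.empty empty_Collect_eq less_irrefl)

(* Dominates the indicator of 0 < c and halves when c drops by 1: the potential
   behind the exponential Markov bounds below. *)
definition exp2_pos :: "real \<Rightarrow> real" where
  "exp2_pos c = (if 0 < c then 2 powr c else 0)"

lemma exp2_pos_nonneg: "0 \<le> exp2_pos c"
  by (simp add: exp2_pos_def)

lemma exp2_pos_mono: "c \<le> d \<Longrightarrow> exp2_pos c \<le> exp2_pos d"
  by (auto simp: exp2_pos_def)

lemma exp2_pos_diff_1: "exp2_pos (c - 1) \<le> exp2_pos c / 2"
  by (auto simp: exp2_pos_def powr_diff)

lemma exp2_pos_le_powr: "c \<le> b \<Longrightarrow> exp2_pos c \<le> 2 powr b"
  by (auto simp: exp2_pos_def)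

lemma exp2_pos_ge_1: "0 < c \<Longrightarrow> 1 \<le> exp2_pos c"
  by (auto simp: exp2_pos_def intro: ge_one_powr_ge_zero)

lemma expectation_yule_step_halving:
  fixes f :: "nat list \<Rightarrow> real"
  assumes ne: "xs \<noteq> []" and p: "0 \<le> p" "p \<le> 1" and G: "G \<subseteq> {..<length xs}"
    and le: "\<And>x. f (xs @ [x]) \<le> H"
    and half: "\<And>i. i \<in> G \<Longrightarrow> f (xs @ [xs ! i]) \<le> H / 2"
  shows "measure_pmf.expectation (yule_step p xs) f \<le> (1 - p * real (card G) / (2 * real (length xs))) * H"
proof -
  define g where "g i = (if i \<in> G then H / 2 else 0)" for i
  have "(\<Sum>i<length xs. p * f (xs @ [xs ! i]) + (1 - p) * f (xs @ [Max (set xs) + 1]))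
      \<le> (\<Sum>i<length xs. p * (H - g i) + (1 - p) * H)"
    using p le half by (intro sum_mono add_mono mult_left_mono) (auto simp: g_def)
  also have "\<dots> = (\<Sum>i<length xs. H - p * g i)"
    by (simp add: algebra_simps)
  also have "\<dots> = length xs * H - p * (\<Sum>i<length xs. g i)"
    by (simp add: sum_subtractf sum_distrib_left)
  also have "(\<Sum>i<length xs. g i) = card G * H / 2"
    using G by (simp add: g_def sum.If_cases Int_absorb1)
  finally have "(\<Sum>i<length xs. p * f (xs @ [xs ! i]) + (1 - p) * f (xs @ [Max (set xs) + 1]))
      / length xs \<le> (length xs * H - p * (card G * H / 2)) / length xs"
    by (rule divide_right_mono) simp
  also have "\<dots> = (1 - p * real (card G) / (2 * real (length xs))) * H"
    using ne by (simp add: field_simps)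
  finally show ?thesis
    by (simp only: expectation_yule_step[OF ne p])
qed

lemma expectation_yule_step_potential:
  assumes ne: "xs \<noteq> []" and p: "0 \<le> p" "p \<le> 1" and len: "length xs \<le> n"
    and a: "a \<le> real (members_ge xs k)" and b: "0 \<le> b" "b \<le> a"
  shows "measure_pmf.expectation (yule_step p xs) (\<lambda>ys. exp2_pos (b - members_ge ys (Suc k)))
    \<le> (1 - p * (a - b) / (2 * real n)) * exp2_pos (b - members_ge xs (Suc k))"
proof -
  define G where "G = {i. i < length xs \<and> count (mset xs) (xs ! i) = k}"
  define H where "H = exp2_pos (b - members_ge xs (Suc k))"
  have "measure_pmf.expectation (yule_step p xs) (\<lambda>ys. exp2_pos (b - members_ge ys (Suc k)))
      \<le> (1 - p * real (card G) / (2 * real (length xs))) * H"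
  proof (rule expectation_yule_step_halving[OF ne p])
    show "G \<subseteq> {..<length xs}"
      by (auto simp: G_def)
    show "exp2_pos (b - members_ge (xs @ [x]) (Suc k)) \<le> H" for x
      unfolding H_def using members_ge_append_mono[of xs "Suc k" "[x]"] by (intro exp2_pos_mono) simp
    show "exp2_pos (b - members_ge (xs @ [xs ! i]) (Suc k)) \<le> H / 2" if "i \<in> G" for i
    proof -
      have "b - members_ge (xs @ [xs ! i]) (Suc k) \<le> (b - members_ge xs (Suc k)) - 1"
        using members_ge_clone_gt[of i xs k] that by (simp add: G_def)
      then show ?thesis
        unfolding H_def by (meson exp2_pos_mono exp2_pos_diff_1 order.trans)
    qed
  qed
  also have "\<dots> \<le> (1 - p * (a - b) / (2 * real n)) * H"
  proof (cases "H = 0")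
    case False
    then have "members_ge xs (Suc k) < b"
      by (auto simp: H_def exp2_pos_def split: if_splits)
    then have "a - b \<le> card G"
      using a members_ge_Suc[of xs k] by (simp add: G_def)
    have len_pos: "0 < real (length xs)"
      using ne by simp
    with len have "0 < real n"
      by linarith
    have "(a - b) / real n \<le> (a - b) / real (length xs)"
      using b len len_pos \<open>0 < real n\<close> by (intro divide_left_mono) auto
    also have "\<dots> \<le> real (card G) / real (length xs)"
      using \<open>a - b \<le> card G\<close> by (rule divide_right_mono) simp
    finally have "p * ((a - b) / real n) / 2 \<le> p * (real (card G) / real (length xs)) / 2"
      using p by (intro divide_right_mono mult_left_mono) auto
    moreover have "0 \<le> H"
      by (simp add: H_def exp2_pos_nonneg)
    ultimately show ?thesis
      by (intro mult_right_mono) auto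
  qed simp
  finally show ?thesis
    unfolding H_def .
qed

lemma phase_factor_nonneg:
  fixes p a b :: real and n :: nat
  assumes "0 \<le> p" "p \<le> 1" "0 \<le> b" "b \<le> a" "a \<le> real n + 1"
  shows "0 \<le> 1 - p * (a - b) / (2 * real n)"
proof (cases "n = 0")
  case False
  have "p * (a - b) \<le> 1 * (real n + 1)"
    using assms by (intro mult_mono) auto
  with False show ?thesis
    by (simp add: field_simps)
qed simp

lemma expectation_yule_run_potential:
  assumes ne: "xs \<noteq> []" and p: "0 \<le> p" "p \<le> 1"
    and a: "a \<le> real (members_ge xs k)" and b: "0 \<le> b" "b \<le> a" and len: "length xs + L \<le> n + 1"
  shows "measure_pmf.expectation (yule_run p L xs) (\<lambda>ys. exp2_pos (b - members_ge ys (Suc k)))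
    \<le> (1 - p * (a - b) / (2 * real n)) ^ L * exp2_pos (b - members_ge xs (Suc k))"
  using len
proof (induction L)
  case (Suc L)
  define c where "c = 1 - p * (a - b) / (2 * real n)"
  define f where "f = (\<lambda>ys. exp2_pos (b - members_ge ys (Suc k)))"
  have "a \<le> real n + 1"
    using a members_ge_le_length[of xs k] Suc.prems by linarith
  with p b have c0: "0 \<le> c"
    unfolding c_def by (rule phase_factor_nonneg)
  have "measure_pmf.expectation (yule_run p (Suc L) xs) f
      = measure_pmf.expectation (yule_run p L xs) (\<lambda>ys. measure_pmf.expectation (yule_step p ys) f)"
    using ne set_pmf_yule_run[of _ p L xs]
    by (auto intro!: expectation_bind_pmf_finite finite_set_pmf_yule_run finite_set_pmf_yule_step)
  also have "\<dots> \<le> measure_pmf.expectation (yule_run p L xs) (\<lambda>ys. c * f ys)"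
  proof (intro expectation_mono_pmf_finite finite_set_pmf_yule_run[OF ne])
    fix ys
    assume "ys \<in> set_pmf (yule_run p L xs)"
    then obtain zs where ys: "ys = xs @ zs" "length zs = L"
      using set_pmf_yule_run by blast
    have "a \<le> real (members_ge ys k)"
      using a members_ge_append_mono[of xs k zs] unfolding ys(1) by (meson of_nat_le_iff order.trans)
    then show "measure_pmf.expectation (yule_step p ys) f \<le> c * f ys"
      unfolding f_def c_def using ne ys Suc.prems p b by (intro expectation_yule_step_potential) auto
  qed
  also have "\<dots> = c * measure_pmf.expectation (yule_run p L xs) f"
    by simp
  also have "\<dots> \<le> c * (c ^ L * f xs)"
    using Suc c0 by (intro mult_left_mono) (auto simp: c_def f_def)
  finally show ?case
    by (simp add: c_def f_def)
qed simp

lemma prob_yule_run_members_ge_less: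
  assumes ne: "xs \<noteq> []" and p: "0 \<le> p" "p \<le> 1"
    and a: "a \<le> real (members_ge xs k)" and b: "0 \<le> b" "b \<le> a" and len: "length xs + L \<le> n + 1"
  shows "measure_pmf.prob (yule_run p L xs) {ys. real (members_ge ys (Suc k)) < b}
    \<le> (1 - p * (a - b) / (2 * real n)) ^ L * 2 powr b"
proof -
  have "measure_pmf.prob (yule_run p L xs) {ys. real (members_ge ys (Suc k)) < b}
      \<le> measure_pmf.expectation (yule_run p L xs) (\<lambda>ys. exp2_pos (b - members_ge ys (Suc k)))"
    by (intro prob_le_expectation_pmf_finite finite_set_pmf_yule_run[OF ne])
      (auto simp: indicator_def exp2_pos_nonneg exp2_pos_ge_1)
  also have "\<dots> \<le> (1 - p * (a - b) / (2 * real n)) ^ L * exp2_pos (b - members_ge xs (Suc k))"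
    by (rule expectation_yule_run_potential[OF assms])
  also have "\<dots> \<le> (1 - p * (a - b) / (2 * real n)) ^ L * 2 powr b"
  proof (rule mult_left_mono)
    have "a \<le> real n + 1"
      using a members_ge_le_length[of xs k] len by linarith
    then show "0 \<le> (1 - p * (a - b) / (2 * real n)) ^ L"
      using p b phase_factor_nonneg by simp
  qed (simp add: exp2_pos_le_powr)
  finally show ?thesis .
qed

lemma prob_yule_chain_members_ge_less:
  fixes T L n :: nat and a b :: real
  assumes p: "0 \<le> p" "p \<le> 1" and b: "0 \<le> b" "b \<le> a" and a: "a \<le> n" and len: "T + L \<le> n"
  shows "measure_pmf.prob (yule_chain p (T + L)) {ys. real (members_ge ys (Suc k)) < b}
    \<le> measure_pmf.prob (yule_chain p T) {ys. real (members_ge ys k) < a}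
      + (1 - p * (a - b) / (2 * real n)) ^ L * 2 powr b"
proof -
  define c where "c = (1 - p * (a - b) / (2 * real n)) ^ L * 2 powr b"
  define A where "A = {ys. real (members_ge ys (Suc k)) < b}"
  define A0 where "A0 = {ys. real (members_ge ys k) < a}"
  have c0: "0 \<le> c"
    unfolding c_def using p b a phase_factor_nonneg by simp
  have ne: "xs \<noteq> []" if "xs \<in> set_pmf (yule_chain p T)" for xs
    using length_yule_chain[OF that] by auto
  have "measure_pmf.prob (yule_chain p (T + L)) A
      = measure_pmf.expectation (yule_chain p T) (\<lambda>xs. measure_pmf.prob (yule_run p L xs) A)"
    using expectation_bind_pmf_finite[of "yule_chain p T" "yule_run p L" "indicator A"] ne
    by (simp add: yule_chain_add finite_set_pmf_yule_chain finite_set_pmf_yule_run)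
  also have "\<dots> \<le> measure_pmf.expectation (yule_chain p T) (\<lambda>xs. indicator A0 xs + c)"
  proof (intro expectation_mono_pmf_finite finite_set_pmf_yule_chain)
    fix xs
    assume xs: "xs \<in> set_pmf (yule_chain p T)"
    show "measure_pmf.prob (yule_run p L xs) A \<le> indicator A0 xs + c"
    proof (cases "xs \<in> A0")
      case True
      then have "1 \<le> indicator A0 xs + c"
        using c0 by simp
      then show ?thesis
        using measure_pmf.prob_le_1[of "yule_run p L xs" A] by linarith
    next
      case False
      then have "measure_pmf.prob (yule_run p L xs) A \<le> c"
        unfolding A_def A0_def c_def using length_yule_chain[OF xs] len ne[OF xs] p b
        by (intro prob_yule_run_members_ge_less) auto
      with False show ?thesis
        by simp
    qed
  qed
  also have "\<dots> = measure_pmf.prob (yule_chain p T) A0 + c"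
    by (subst Bochner_Integration.integral_add)
      (auto simp: integrable_measure_pmf_finite finite_set_pmf_yule_chain)
  finally show ?thesis
    unfolding A_def A0_def c_def .
qed

(* The rate r = p/(32 j) is small enough for the decay over L >= n/(4j) births to
   beat the factor 2^(a r) lost in the Markov inequality. *)
lemma phase_error_le_exp:
  fixes n j L :: nat and p a r :: real
  assumes p: "0 \<le> p" "p \<le> 1" and j: "1 \<le> j" and r: "r = p / (32 * real j)"
    and a: "0 \<le> a" "a \<le> n" and n: "0 < n" and nL: "n \<le> 4 * j * L"
  shows "(1 - p * (a - a * r) / (2 * real n)) ^ L * 2 powr (a * r) \<le> exp (- (a * r))"
proof -
  define x where "x = p * (a - a * r) / (2 * real n)"
  have r0: "0 \<le> r" and r_half: "r \<le> 1 / 2"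
    using p j unfolding r by (auto simp: field_simps)
  have ar: "0 \<le> a * r" "a * r \<le> a"
    using a r0 r_half by (auto simp: mult_left_le)
  have x0: "0 \<le> x"
    unfolding x_def using p ar by simp
  have "p * (a - a * r) \<le> 1 * real n"
    using p a ar by (intro mult_mono) auto
  then have x1: "x \<le> 1"
    unfolding x_def using n by (simp add: field_simps)
  have rate: "2 * (a * r) \<le> x * L"
  proof -
    have "2 * (a * r) = p * a / 4 * (1 / (4 * j))"
      using j unfolding r by (simp add: field_simps)
    also have "\<dots> \<le> p * a / 4 * (L / n)"
      using p a n j nL by (intro mult_left_mono) (simp_all add: field_simps flip: of_nat_mult)
    also have "\<dots> \<le> p * (a - a * r) / 2 * (L / n)"
    proof (rule mult_right_mono)
      have "a / 2 \<le> a - a * r"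
        using mult_left_mono[OF r_half a(1)] by simp
      then have "p * (a / 2) \<le> p * (a - a * r)"
        using p(1) by (rule mult_left_mono)
      then show "p * a / 4 \<le> p * (a - a * r) / 2"
        by (simp add: mult.commute)
    qed simp
    also have "\<dots> = x * L"
      unfolding x_def by simp
    finally show ?thesis .
  qed
  have "(1 - x) ^ L \<le> exp (- x) ^ L"
    using x0 x1 exp_ge_add_one_self[of "- x"] by (intro power_mono) auto
  also have "\<dots> = exp (- (x * L))"
    by (simp add: exp_of_nat_mult[symmetric] mult.commute)
  also have "\<dots> \<le> exp (- (2 * (a * r)))"
    using rate by simp
  finally have decay: "(1 - x) ^ L \<le> exp (- (2 * (a * r)))" .
  have "2 powr (a * r) = exp (a * r * ln 2)"
    by (simp add: powr_def mult.commute)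
  also have "\<dots> \<le> exp (a * r)"
    using ar ln_2_less_1 by (simp add: mult_left_le)
  finally have "(1 - x) ^ L * 2 powr (a * r) \<le> exp (- (2 * (a * r))) * exp (a * r)"
    using decay x1 by (intro mult_mono) auto
  also have "\<dots> = exp (- (a * r))"
    by (simp flip: exp_add)
  finally show ?thesis
    unfolding x_def .
qed

lemma prob_members_ge_less_phases:
  fixes n L j T k :: nat and p :: real
  assumes p: "0 \<le> p" "p \<le> 1" and j: "1 \<le> j" and nL: "n \<le> 4 * j * L"
    and T: "n \<le> 2 * (T + 1)" and len: "T + k * L + 1 \<le> n"
  shows "measure_pmf.prob (yule_chain p (T + k * L))
      {ys. real (members_ge ys (Suc k)) < n / 2 * (p / (32 * real j)) ^ k}
    \<le> k * exp (- (n / 2 * (p / (32 * real j)) ^ k))"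
  using len
proof (induction k)
  case 0
  have half: "real n / 2 \<le> real (members_ge ys 1)" if "ys \<in> set_pmf (yule_chain p T)" for ys
    using members_ge_1[of ys] length_yule_chain[OF that] T by simp
  have "measure_pmf.prob (yule_chain p T) {ys. real (members_ge ys 1) < n / 2} = 0"
    by (auto simp: measure_pmf_zero_iff dest: half)
  then show ?case
    by simp
next
  case (Suc k)
  define r where "r = p / (32 * real j)"
  define a where "a = n / 2 * r ^ k"
  have r: "0 \<le> r" "r \<le> 1"
    using p j unfolding r_def by (auto simp: field_simps)
  have "r ^ k \<le> 1"
    using r by (simp add: power_le_one)
  then have a: "0 \<le> a" "a \<le> n"
    unfolding a_def using r mult_left_mono[of "r ^ k" 1 "real n / 2"] by auto
  have "measure_pmf.prob (yule_chain p (T + k * L + L))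
      {ys. real (members_ge ys (Suc (Suc k))) < a * r}
    \<le> measure_pmf.prob (yule_chain p (T + k * L)) {ys. real (members_ge ys (Suc k)) < a}
      + (1 - p * (a - a * r) / (2 * real n)) ^ L * 2 powr (a * r)"
  proof (rule prob_yule_chain_members_ge_less[OF p])
    show "0 \<le> a * r" and "a * r \<le> a"
      using a r by (auto intro: mult_left_le)
  qed (use a Suc.prems in auto)
  also have "\<dots> \<le> k * exp (- a) + exp (- (a * r))"
  proof (rule add_mono)
    show "measure_pmf.prob (yule_chain p (T + k * L)) {ys. real (members_ge ys (Suc k)) < a}
        \<le> k * exp (- a)"
      using Suc by (simp add: a_def r_def)
    show "(1 - p * (a - a * r) / (2 * real n)) ^ L * 2 powr (a * r) \<le> exp (- (a * r))"
      by (rule phase_error_le_exp[OF p j r_def a _ nL]) (use Suc.prems in simp)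
  qed
  also have "\<dots> \<le> Suc k * exp (- (a * r))"
  proof -
    have "exp (- a) \<le> exp (- (a * r))"
      using a r by (simp add: mult_left_le)
    then show ?thesis
      using mult_left_mono[of "exp (- a)" "exp (- (a * r))" "real k"] by (simp add: algebra_simps)
  qed
  also have "a * r = n / 2 * (p / (32 * real j)) ^ Suc k"
    by (simp add: a_def r_def)
  also have "T + k * L + L = T + Suc k * L"
    by simp
  finally show ?case .
qed

lemma phase_length_exists:
  fixes n j :: nat
  assumes j: "1 \<le> j" and n: "4 * j \<le> n"
  obtains L where "n \<le> 4 * j * L" and "2 * j * L \<le> n"
proof
  define q where "q = n div (2 * j)"
  show "2 * j * q \<le> n"
    unfolding q_def by (rule times_div_less_eq_dividend)
  have "2 * (2 * j) div (2 * j) \<le> q"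
    unfolding q_def using n by (intro div_le_mono) simp
  then have "2 * j * 1 \<le> 2 * j * q"
    using j by (intro mult_le_mono2) simp
  moreover have "2 * j * q + n mod (2 * j) = n"
    unfolding q_def by (rule mult_div_mod_eq)
  moreover have "n mod (2 * j) < 2 * j"
    using j by simp
  moreover have "4 * j * q = 2 * (2 * j * q)"
    by simp
  ultimately show "n \<le> 4 * j * q"
    by linarith
qed

lemma big_family_prob_lower_bound:
  fixes n j :: nat and p K :: real
  assumes p: "0 \<le> p" "p \<le> 1" and j: "2 \<le> j" and n: "4 * j \<le> n" and K: "K < j"
    and a: "1 \<le> n / 2 * (p / (32 * real j)) ^ (j - 1)"
  shows "1 - (j - 1) * exp (- (n / 2 * (p / (32 * real j)) ^ (j - 1))) \<le> big_family_prob p n K"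
proof -
  define a where "a = n / 2 * (p / (32 * real j)) ^ (j - 1)"
  define E where "E = {xs. \<exists>i. K < real (Ycount xs i)}"
  have "1 \<le> j"
    using j by simp
  then obtain L where nL: "n \<le> 4 * j * L" and jL: "2 * j * L \<le> n"
    using phase_length_exists n by blast
  define m where "m = (j - 1) * L"
  have "m \<le> j * L"
    unfolding m_def by simp
  with jL have "2 * m \<le> n"
    unfolding mult.assoc by linarith
  define T where "T = n - 1 - m"
  have T_len: "T + m = n - 1" and T_half: "n \<le> 2 * (T + 1)"
    using \<open>2 * m \<le> n\<close> n j unfolding T_def by arith+
  have "measure_pmf.prob (yule_chain p (T + (j - 1) * L))
      {ys. real (members_ge ys (Suc (j - 1))) < a} \<le> (j - 1) * exp (- a)"
    unfolding a_def by (rule prob_members_ge_less_phases[OF p _ nL T_half]) (use j T_len n in \<open>auto simp: m_def\<close>)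
  then have small: "measure_pmf.prob (yule_chain p (n - 1)) {ys. real (members_ge ys j) < a}
      \<le> (j - 1) * exp (- a)"
    using T_len j by (simp add: m_def)
  have "ys \<in> E" if "a \<le> real (members_ge ys j)" for ys
  proof -
    have "0 < members_ge ys j"
      using that a by (simp add: a_def)
    then obtain v where "j \<le> count (mset ys) v"
      using members_ge_pos_imp_ex_count by blast
    with K have "K < real (Ycount ys v)"
      unfolding Ycount_def by linarith
    then show ?thesis
      unfolding E_def by blast
  qed
  then have "measure_pmf.prob (yule_chain p (n - 1)) (UNIV - E)
      \<le> measure_pmf.prob (yule_chain p (n - 1)) {ys. real (members_ge ys j) < a}"
    by (intro measure_pmf.finite_measure_mono) (auto simp: not_less[symmetric])
  moreover have "measure_pmf.prob (yule_chain p (n - 1)) (UNIV - E) = 1 - big_family_prob p n K"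
    using measure_pmf.prob_compl[of E "yule_chain p (n - 1)"]
    by (simp add: big_family_prob_def yule_at_tau_def E_def)
  ultimately show ?thesis
    using small unfolding a_def by linarith
qed

section \<open>Sets of individuals of equal type\<close>

definition same_type_subsets :: "nat list \<Rightarrow> nat \<Rightarrow> nat" where
  "same_type_subsets xs j = (\<Sum>v\<in>set xs. count (mset xs) v choose j)"

lemma same_type_subsets_1: "same_type_subsets xs 1 = length xs"
  by (simp add: same_type_subsets_def count_mset sum_count_set)

lemma same_type_subsets_append:
  assumes "1 \<le> j"
  shows "same_type_subsets (xs @ [x]) j = same_type_subsets xs j + (count (mset xs) x choose (j - 1))"
proof -
  obtain i where j: "j = Suc i"
    using assms by (cases j) auto
  let ?A = "insert x (set xs)"
  have "same_type_subsets xs j = (\<Sum>v\<in>?A. count (mset xs) v choose j)"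
  proof (cases "x \<in> set xs")
    case False
    then have x_new: "count (mset xs) x = 0"
      by simp
    from False show ?thesis
      by (simp add: same_type_subsets_def x_new j)
  qed (simp add: same_type_subsets_def insert_absorb)
  moreover have "same_type_subsets (xs @ [x]) j =
      (\<Sum>v\<in>?A. (count (mset xs) v choose j) + (if v = x then count (mset xs) x choose i else 0))"
    unfolding same_type_subsets_def j by (intro sum.cong) auto
  ultimately show ?thesis
    by (simp add: sum.distrib j)
qed

lemma mult_choose_eq: "c * (c choose j) = Suc j * (c choose Suc j) + j * (c choose j)"
proof (cases "j \<le> c")
  case True
  have "(c - j) * (c choose j) = Suc j * (c choose Suc j)"
    by (simp only: binomial_absorb_comp binomial_absorption)
  moreover have "c * (c choose j) = (c - j) * (c choose j) + j * (c choose j)"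
    using True by (simp flip: add_mult_distrib)
  ultimately show ?thesis
    by simp
qed (simp add: binomial_eq_0)

lemma sum_nth_choose_count:
  "(\<Sum>i<length xs. count (mset xs) (xs ! i) choose j) =
    Suc j * same_type_subsets xs (Suc j) + j * same_type_subsets xs j"
proof -
  have "(\<Sum>i<length xs. count (mset xs) (xs ! i) choose j) =
      (\<Sum>v\<in>set xs. count (mset xs) v * (count (mset xs) v choose j))"
    using sum_list_map_eq_sum_count[of "\<lambda>v. count (mset xs) v choose j" xs]
    by (simp add: sum_list_sum_nth atLeast0LessThan count_mset)
  also have "\<dots> = (\<Sum>v\<in>set xs. Suc j * (count (mset xs) v choose Suc j) + j * (count (mset xs) v choose j))"
    by (simp only: mult_choose_eq)
  finally show ?thesis
    by (simp add: same_type_subsets_def sum.distrib sum_distrib_left)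
qed

lemma expectation_yule_step_same_type_subsets:
  assumes ne: "xs \<noteq> []" and p: "0 \<le> p" "p \<le> 1"
  shows "measure_pmf.expectation (yule_step p xs) (\<lambda>ys. real (same_type_subsets ys (Suc (Suc j))))
    = same_type_subsets xs (Suc (Suc j)) + p / length xs *
        (Suc (Suc j) * same_type_subsets xs (Suc (Suc j)) + Suc j * same_type_subsets xs (Suc j))"
proof -
  let ?S = "\<lambda>ys. real (same_type_subsets ys (Suc (Suc j)))"
  have "Max (set xs) + 1 \<notin> set xs"
  proof
    assume "Max (set xs) + 1 \<in> set xs"
    then have "Max (set xs) + 1 \<le> Max (set xs)"
      by (simp add: Max_ge)
    then show False
      by simp
  qed
  then have new_type: "count (mset xs) (Max (set xs) + 1) = 0"
    by simp
  have mutant: "?S (xs @ [Max (set xs) + 1]) = ?S xs"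
    by (simp add: same_type_subsets_append new_type del: One_nat_def)
  have clone: "?S (xs @ [xs ! i]) = ?S xs + real (count (mset xs) (xs ! i) choose Suc j)" for i
    by (simp add: same_type_subsets_append)
  have "measure_pmf.expectation (yule_step p xs) ?S =
      (\<Sum>i<length xs. ?S xs + p * real (count (mset xs) (xs ! i) choose Suc j)) / length xs"
    unfolding expectation_yule_step[OF ne p] mutant clone by (simp add: algebra_simps)
  also have "\<dots> = ?S xs + p / length xs * real (\<Sum>i<length xs. count (mset xs) (xs ! i) choose Suc j)"
    using ne by (simp add: sum.distrib sum_distrib_left field_simps)
  finally show ?thesis
    by (simp only: sum_nth_choose_count)
qed

lemma expectation_yule_chain_same_type_subsets_Suc:
  assumes p: "0 \<le> p" "p \<le> 1"
  shows "measure_pmf.expectation (yule_chain p (Suc m)) (\<lambda>ys. real (same_type_subsets ys (Suc (Suc j))))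
    = (1 + p * Suc (Suc j) / Suc m) *
        measure_pmf.expectation (yule_chain p m) (\<lambda>ys. real (same_type_subsets ys (Suc (Suc j))))
      + p * Suc j / Suc m *
        measure_pmf.expectation (yule_chain p m) (\<lambda>ys. real (same_type_subsets ys (Suc j)))"
proof -
  have ne: "xs \<noteq> []" if "xs \<in> set_pmf (yule_chain p m)" for xs
    using length_yule_chain[OF that] by auto
  have "measure_pmf.expectation (yule_chain p (Suc m)) (\<lambda>ys. real (same_type_subsets ys (Suc (Suc j))))
      = measure_pmf.expectation (yule_chain p m) (\<lambda>xs.
          measure_pmf.expectation (yule_step p xs) (\<lambda>ys. real (same_type_subsets ys (Suc (Suc j)))))"
    using ne by (simp add: expectation_bind_pmf_finite finite_set_pmf_yule_chain finite_set_pmf_yule_step)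
  also have "\<dots> = measure_pmf.expectation (yule_chain p m) (\<lambda>xs.
      (1 + p * Suc (Suc j) / Suc m) * real (same_type_subsets xs (Suc (Suc j)))
      + p * Suc j / Suc m * real (same_type_subsets xs (Suc j)))"
  proof (rule expectation_cong_pmf)
    fix xs
    assume xs: "xs \<in> set_pmf (yule_chain p m)"
    show "measure_pmf.expectation (yule_step p xs) (\<lambda>ys. real (same_type_subsets ys (Suc (Suc j))))
      = (1 + p * Suc (Suc j) / Suc m) * real (same_type_subsets xs (Suc (Suc j)))
        + p * Suc j / Suc m * real (same_type_subsets xs (Suc j))"
      unfolding expectation_yule_step_same_type_subsets[OF ne[OF xs] p] length_yule_chain[OF xs]
      by (simp add: divide_inverse algebra_simps)
  qed
  also have "\<dots> = (1 + p * Suc (Suc j) / Suc m) *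
        measure_pmf.expectation (yule_chain p m) (\<lambda>ys. real (same_type_subsets ys (Suc (Suc j))))
      + p * Suc j / Suc m *
        measure_pmf.expectation (yule_chain p m) (\<lambda>ys. real (same_type_subsets ys (Suc j)))"
    by (simp add: integrable_measure_pmf_finite finite_set_pmf_yule_chain)
  finally show ?thesis .
qed

lemma expectation_same_type_subsets_le:
  fixes p :: real
  assumes p: "0 \<le> p" and pj: "p * Suc j \<le> 1 / 2"
  shows "measure_pmf.expectation (yule_chain p m) (\<lambda>ys. real (same_type_subsets ys (Suc j)))
    \<le> Suc m * ((2 * p) ^ j * fact j)"
  using pj
proof (induction j arbitrary: m)
  case 0
  have "measure_pmf.expectation (yule_chain p m) (\<lambda>ys. real (same_type_subsets ys (Suc 0)))
      = measure_pmf.expectation (yule_chain p m) (\<lambda>_. real (Suc m))"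
    by (intro expectation_cong_pmf) (simp add: same_type_subsets_1[unfolded One_nat_def] length_yule_chain)
  then show ?case
    by simp
next
  case (Suc j)
  define B where "B i = (2 * p) ^ i * fact i" for i
  have pj: "p * Suc (Suc j) \<le> 1 / 2"
    by (rule Suc.prems)
  have "p * 1 \<le> p * Suc (Suc j)"
    using p by (intro mult_left_mono) auto
  with pj have p1: "p \<le> 1"
    by linarith
  have B_nonneg: "0 \<le> B i" for i
    unfolding B_def using p by simp
  have B_Suc: "p * Suc j * B j = B (Suc j) / 2"
    unfolding B_def by (simp add: algebra_simps)
  have IH: "measure_pmf.expectation (yule_chain p m) (\<lambda>ys. real (same_type_subsets ys (Suc j)))
      \<le> Suc m * B j" for m
  proof -
    have "p * Suc j \<le> p * Suc (Suc j)"
      using p by (intro mult_left_mono) auto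
    with Suc show ?thesis
      unfolding B_def by simp
  qed
  show ?case
  proof (induction m)
    case 0
    have "same_type_subsets [1] (Suc (Suc j)) = 0"
      by (simp add: same_type_subsets_def)
    then show ?case
      using B_nonneg[of "Suc j"] by (simp add: B_def)
  next
    case (Suc m)
    let ?E = "\<lambda>i. measure_pmf.expectation (yule_chain p m) (\<lambda>ys. real (same_type_subsets ys i))"
    have "measure_pmf.expectation (yule_chain p (Suc m)) (\<lambda>ys. real (same_type_subsets ys (Suc (Suc j))))
        = (1 + p * Suc (Suc j) / Suc m) * ?E (Suc (Suc j)) + p * Suc j / Suc m * ?E (Suc j)"
      by (rule expectation_yule_chain_same_type_subsets_Suc[OF p p1])
    also have "\<dots> \<le> (1 + p * Suc (Suc j) / Suc m) * (Suc m * B (Suc j)) + p * Suc j / Suc m * (Suc m * B j)"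
      using Suc.IH IH[of m] p by (intro add_mono mult_left_mono) (auto simp: B_def)
    also have "\<dots> = Suc m * B (Suc j) + p * Suc (Suc j) * B (Suc j) + p * Suc j * B j"
      by (simp add: field_simps del: of_nat_Suc)
    also have "\<dots> \<le> Suc m * B (Suc j) + 1 / 2 * B (Suc j) + B (Suc j) / 2"
      unfolding B_Suc using pj B_nonneg[of "Suc j"] by (intro add_mono mult_right_mono) auto
    also have "\<dots> = Suc (Suc m) * B (Suc j)"
      by (simp add: algebra_simps)
    finally show ?case
      unfolding B_def .
  qed
qed

lemma big_family_prob_upper_bound:
  fixes n j :: nat and p K :: real
  assumes p: "0 \<le> p" and pj: "p * Suc j \<le> 1 / 2" and K: "j \<le> K" and n: "1 \<le> n"
  shows "big_family_prob p n K \<le> n * ((2 * p) ^ j * fact j)"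
proof -
  have "big_family_prob p n K
      \<le> measure_pmf.expectation (yule_chain p (n - 1)) (\<lambda>ys. real (same_type_subsets ys (Suc j)))"
    unfolding big_family_prob_def yule_at_tau_def
  proof (intro prob_le_expectation_pmf_finite finite_set_pmf_yule_chain)
    fix xs
    show "indicator {xs. \<exists>i. K < real (Ycount xs i)} xs \<le> real (same_type_subsets xs (Suc j))"
    proof (cases "\<exists>i. K < real (Ycount xs i)")
      case True
      then obtain v where "K < real (count (mset xs) v)"
        unfolding Ycount_def by blast
      with K have big: "Suc j \<le> count (mset xs) v"
        by linarith
      have "v \<in> set xs"
      proof (rule ccontr)
        assume "v \<notin> set xs"
        then have "count (mset xs) v = 0"
          by simp
        with big show False
          by simp
      qed
      have "1 \<le> count (mset xs) v choose Suc j"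
        using big by (simp add: Suc_le_eq)
      also have "\<dots> \<le> same_type_subsets xs (Suc j)"
        unfolding same_type_subsets_def using \<open>v \<in> set xs\<close> by (intro member_le_sum) auto
      finally show ?thesis
        using True by simp
    qed simp
  qed
  also have "\<dots> \<le> Suc (n - 1) * ((2 * p) ^ j * fact j)"
    by (rule expectation_same_type_subsets_le[OF p pj])
  finally show ?thesis
    using n by simp
qed

section \<open>Asymptotics\<close>

lemma powr_inverse_power:
  fixes x :: real
  assumes "0 \<le> x" and "0 < l"
  shows "(x powr (1 / real l)) ^ l = x"
  using assms by (simp flip: root_powr_inverse)

lemma filterlim_mult_power_at_top:
  fixes q :: "nat \<Rightarrow> real"
  assumes l: "1 \<le> l" and q: "filterlim (\<lambda>n. q n * real n powr (1 / real l)) at_top sequentially"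
  shows "filterlim (\<lambda>n. real n * q n ^ l) at_top sequentially"
proof -
  have "filterlim (\<lambda>n. (q n * real n powr (1 / real l)) ^ l) at_top sequentially"
    using l by (intro filterlim_pow_at_top q) simp
  moreover have "(q n * real n powr (1 / real l)) ^ l = real n * q n ^ l" for n
    using l by (simp add: power_mult_distrib powr_inverse_power)
  ultimately show ?thesis
    by simp
qed

lemma big_family_prob_tendsto_1:
  fixes p :: "nat \<Rightarrow> real"
  assumes p0: "\<And>n. 0 \<le> p n" and p1: "\<And>n. p n \<le> 1"
    and rate: "\<And>l. 1 \<le> l \<Longrightarrow> filterlim (\<lambda>n. p n * real n powr (1 / real l)) at_top sequentially"
  shows "((\<lambda>n. big_family_prob (p n) n K) \<longlongrightarrow> 1) sequentially"
proof -
  obtain j0 :: nat where "K < j0"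
    using reals_Archimedean2 by blast
  define j where "j = max j0 2"
  have j: "2 \<le> j" "K < j"
    using \<open>K < j0\<close> unfolding j_def by auto
  define c where "c = 1 / 2 * (1 / (32 * real j)) ^ (j - 1)"
  define a where "a n = real n / 2 * (p n / (32 * real j)) ^ (j - 1)" for n
  have "a = (\<lambda>n. c * (real n * p n ^ (j - 1)))"
    by (simp add: fun_eq_iff a_def c_def power_divide)
  moreover have "filterlim (\<lambda>n. c * (real n * p n ^ (j - 1))) at_top sequentially"
    using j by (intro filterlim_tendsto_pos_mult_at_top[OF tendsto_const] filterlim_mult_power_at_top rate)
      (auto simp: c_def)
  ultimately have a_lim: "filterlim a at_top sequentially"
    by simp
  then have exp_lim: "((\<lambda>n. exp (- a n)) \<longlongrightarrow> 0) sequentially"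
    by (intro filterlim_compose[OF exp_at_bot]) (simp add: filterlim_uminus_at_bot)
  have lower_lim: "((\<lambda>n. 1 - (j - 1) * exp (- a n)) \<longlongrightarrow> 1) sequentially"
    using tendsto_diff[OF tendsto_const[of 1] tendsto_mult[OF tendsto_const[of "real (j - 1)"] exp_lim]]
    by simp
  have "\<forall>\<^sub>F n in sequentially. 1 - (j - 1) * exp (- a n) \<le> big_family_prob (p n) n K"
    using eventually_ge_at_top[of "4 * j"] filterlim_at_top[THEN iffD1, OF a_lim, rule_format, of 1]
  proof eventually_elim
    case (elim n)
    then show ?case
      using big_family_prob_lower_bound[OF p0 p1 j(1) _ j(2)] by (simp add: a_def)
  qed
  moreover have "\<forall>\<^sub>F n in sequentially. big_family_prob (p n) n K \<le> 1"
    by (simp add: big_family_prob_def)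
  ultimately show ?thesis
    by (rule tendsto_sandwich[OF _ _ lower_lim tendsto_const])
qed

lemma Liminf_big_family_prob_eq_1:
  fixes p :: "nat \<Rightarrow> real"
  assumes "\<And>n. 0 \<le> p n" and "\<And>n. p n \<le> 1"
    and "\<And>l. 1 \<le> l \<Longrightarrow> filterlim (\<lambda>n. p n * real n powr (1 / real l)) at_top sequentially"
  shows "Liminf sequentially (\<lambda>n. ereal (big_family_prob (p n) n K)) = 1"
proof -
  have "((\<lambda>n. ereal (big_family_prob (p n) n K)) \<longlongrightarrow> 1) sequentially"
    unfolding one_ereal_def using assms by (intro tendsto_ereal big_family_prob_tendsto_1)
  then show ?thesis
    by (rule lim_imp_Liminf[OF trivial_limit_sequentially])
qed

lemma big_family_prob_le_of_rate_bound:
  fixes q Z K :: real and n l :: nat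
  assumes q: "0 \<le> q" and l: "1 \<le> l" and n: "1 \<le> n" and K: "real l + 1 \<le> K"
    and rate: "q * real n powr (1 / real l) < Z"
    and small: "(real l + 2) * Z * real n powr (- (1 / real l)) \<le> 1 / 2"
  shows "big_family_prob q n K \<le> 2 ^ Suc l * fact (Suc l) * Z ^ Suc l * real n powr (- (1 / real l))"
proof -
  define x where "x = real n powr (1 / real l)"
  define y where "y = real n powr (- (1 / real l))"
  have xy: "x * y = 1" and x_pos: "0 < x" and y_pos: "0 < y"
    using n by (simp_all add: x_def y_def flip: powr_add)
  have "0 \<le> q * x"
    using q x_pos by simp
  with rate have Z_nonneg: "0 \<le> Z"
    unfolding x_def by linarith
  have "q = q * x * y"
    using xy by (simp add: mult.assoc)
  also have "\<dots> \<le> Z * y"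
    using rate y_pos unfolding x_def[symmetric] by (intro mult_right_mono) auto
  finally have q_le: "q \<le> Z * y" .
  then have "q * (real l + 2) \<le> Z * y * (real l + 2)"
    by (intro mult_right_mono) auto
  also have "\<dots> \<le> 1 / 2"
    using small unfolding y_def[symmetric] by (simp add: mult_ac)
  finally have "q * Suc (Suc l) \<le> 1 / 2"
    by (simp add: add.commute)
  then have "big_family_prob q n K \<le> n * ((2 * q) ^ Suc l * fact (Suc l))"
    using q K n by (intro big_family_prob_upper_bound) auto
  also have "\<dots> = 2 ^ Suc l * fact (Suc l) * (real n * q ^ Suc l)"
    by (simp add: power_mult_distrib)
  also have "real n * q ^ Suc l = (q * x) ^ l * q"
    using l by (simp add: x_def power_mult_distrib powr_inverse_power)
  also have "\<dots> \<le> Z ^ l * (Z * y)"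
    using q x_pos rate q_le Z_nonneg unfolding x_def[symmetric] by (intro mult_mono power_mono) auto
  finally show ?thesis
    by (simp add: y_def mult_ac)
qed

lemma Liminf_ereal_eq_0_if_frequently_le:
  fixes f :: "nat \<Rightarrow> real"
  assumes nonneg: "\<And>n. 0 \<le> f n" and small: "\<And>e. 0 < e \<Longrightarrow> \<exists>\<^sub>F n in sequentially. f n \<le> e"
  shows "Liminf sequentially (\<lambda>n. ereal (f n)) = 0"
proof (rule antisym)
  show "Liminf sequentially (\<lambda>n. ereal (f n)) \<le> 0"
  proof (rule ereal_le_epsilon2)
    fix e :: real
    assume "0 < e"
    show "Liminf sequentially (\<lambda>n. ereal (f n)) \<le> 0 + ereal e"
    proof (rule ccontr)
      assume "\<not> ?thesis"
      then have "\<forall>\<^sub>F n in sequentially. ereal e < ereal (f n)"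
        by (intro less_LiminfD) (simp add: not_le)
      then have "\<forall>\<^sub>F n in sequentially. e < f n"
        by simp
      with small[OF \<open>0 < e\<close>] show False
        by (simp add: frequently_def not_le)
    qed
  qed
  show "0 \<le> Liminf sequentially (\<lambda>n. ereal (f n))"
    by (intro Liminf_bounded) (simp add: nonneg)
qed

lemma Liminf_big_family_prob_eq_0:
  fixes p :: "nat \<Rightarrow> real"
  assumes p0: "\<And>n. 0 \<le> p n" and l: "1 \<le> l"
    and slow: "\<not> filterlim (\<lambda>n. p n * real n powr (1 / real l)) at_top sequentially"
    and K: "real l + 1 \<le> K"
  shows "Liminf sequentially (\<lambda>n. ereal (big_family_prob (p n) n K)) = 0"
proof (rule Liminf_ereal_eq_0_if_frequently_le)
  obtain Z where Z: "\<exists>\<^sub>F n in sequentially. p n * real n powr (1 / real l) < Z"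
    using slow by (auto simp: filterlim_at_top not_eventually not_le)
  define C where "C = 2 ^ Suc l * fact (Suc l) * Z ^ Suc l"
  have y_lim: "((\<lambda>n. real n powr (- (1 / real l))) \<longlongrightarrow> 0) sequentially"
    using l by (intro tendsto_neg_powr filterlim_real_sequentially) auto
  fix e :: real
  assume "0 < e"
  have "\<forall>\<^sub>F n in sequentially. (real l + 2) * Z * real n powr (- (1 / real l)) < 1 / 2"
    using tendsto_mult[OF tendsto_const y_lim, of "(real l + 2) * Z"] by (intro order_tendstoD(2)) auto
  moreover have "\<forall>\<^sub>F n in sequentially. C * real n powr (- (1 / real l)) < e"
    using tendsto_mult[OF tendsto_const y_lim, of C] \<open>0 < e\<close> by (intro order_tendstoD(2)) auto
  ultimately have "\<forall>\<^sub>F n in sequentially. p n * real n powr (1 / real l) < Z \<longrightarrow> big_family_prob (p n) n K \<le> e"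
    using eventually_ge_at_top[of 1]
  proof eventually_elim
    case (elim n)
    show ?case
    proof
      assume "p n * real n powr (1 / real l) < Z"
      then have "big_family_prob (p n) n K \<le> C * real n powr (- (1 / real l))"
        unfolding C_def using p0 l elim K by (intro big_family_prob_le_of_rate_bound) auto
      with elim(2) show "big_family_prob (p n) n K \<le> e"
        by linarith
    qed
  qed
  with Z show "\<exists>\<^sub>F n in sequentially. big_family_prob (p n) n K \<le> e"
    by (rule frequently_mp[rotated])
qed (simp add: big_family_prob_def)

theorem corollary4p3:
  fixes p :: "nat \<Rightarrow> real"
  assumes "\<And>n. 0 \<le> p n" and "\<And>n. p n \<le> 1"
  shows "(((\<lambda>K. Liminf sequentially (\<lambda>n. ereal (big_family_prob (p n) n K))) \<longlongrightarrow> 1) at_top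
            \<longleftrightarrow> (\<forall>l::nat. l \<ge> 1 \<longrightarrow>
                   filterlim (\<lambda>n. p n * real n powr (1 / real l)) at_top sequentially))
       \<and> ((\<not> ((\<lambda>K. Liminf sequentially (\<lambda>n. ereal (big_family_prob (p n) n K))) \<longlongrightarrow> 1) at_top
            \<or> \<not> (\<forall>l::nat. l \<ge> 1 \<longrightarrow>
                   filterlim (\<lambda>n. p n * real n powr (1 / real l)) at_top sequentially))
          \<longrightarrow> ((\<lambda>K. Liminf sequentially (\<lambda>n. ereal (big_family_prob (p n) n K))) \<longlongrightarrow> 0) at_top)"
proof -
  define F where "F = (\<lambda>K. Liminf sequentially (\<lambda>n. ereal (big_family_prob (p n) n K)))"
  define fast where "fast \<longleftrightarrow> (\<forall>l::nat. l \<ge> 1 \<longrightarrow>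
    filterlim (\<lambda>n. p n * real n powr (1 / real l)) at_top sequentially)"
  have one: "(F \<longlongrightarrow> 1) at_top" if fast
  proof -
    have "F K = 1" for K
      unfolding F_def by (rule Liminf_big_family_prob_eq_1[OF assms]) (use that in \<open>auto simp: fast_def\<close>)
    then have "F = (\<lambda>_. 1)"
      by (intro ext)
    then show ?thesis
      by simp
  qed
  have zero: "(F \<longlongrightarrow> 0) at_top" if not_fast: "\<not> fast"
  proof -
    obtain l :: nat where l: "1 \<le> l"
      and slow: "\<not> filterlim (\<lambda>n. p n * real n powr (1 / real l)) at_top sequentially"
      using not_fast unfolding fast_def by blast
    have "\<forall>\<^sub>F K in at_top. F K = 0"
      using eventually_ge_at_top[of "real l + 1"]
    proof eventually_elim
      case (elim K)
      show ?case
        unfolding F_def using assms(1) l slow elim by (rule Liminf_big_family_prob_eq_0)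
    qed
    then show ?thesis
      by (rule tendsto_eventually)
  qed
  have "\<not> ((F \<longlongrightarrow> 1) at_top \<and> (F \<longlongrightarrow> 0) at_top)"
    using tendsto_unique[OF trivial_limit_at_top_linorder, of F "1 :: ereal" 0] by auto
  with one zero show ?thesis
    unfolding F_def fast_def by blast
qed

end
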